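(* For every prime $p>2$ and every integer $a$ with $|a|\le 2\sqrt p$, there is a prime $\ell\neq p$ dividing $(p+1+a)(p+1-a)$. Moreover this fails for $p=2$: there is an integer $a$ with $|a|\le 2\sqrt 2$ such that $(3+a)(3-a)$ is a power of $2$.
   Context: This is the case $n=1$ (rational $p$-th Fourier coefficients) of the statement: there is $C_1$ such that for every prime $p>C_1$ and every $p$-th Fourier coefficient of degree $1$ there is a prime not over $p$ dividing $(a_p+p+1)(a_p-p-1)$; the paper states that the best such bound is $C_1=2$. *)

theory Defs
  imports Complex_Main "HOL-Computational_Algebra.Primes"
begin

end

theory Submission
  imports Defs
begin

text \<open>Write \<open>A = p + 1 + a\<close> and \<open>B = p + 1 - a\<close>. The Hasse bound gives
  \<open>a\<^sup>2 \<le> 4p < (p + 1)\<^sup>2\<close>, so \<open>A, B \<ge> 1\<close>, and \<open>A + B = 2p + 2\<close>.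
  Since \<open>p\<close> does not divide \<open>2\<close>, at most one of \<open>A, B\<close> is divisible by \<open>p\<close>; if the
  other one is \<open>1\<close>, the first one is \<open>2p + 1\<close>, which is prime to \<open>p\<close>. Either way one
  factor exceeds \<open>1\<close> and is prime to \<open>p\<close>, and any prime divisor of it works.\<close>

lemma abs_le_of_abs_le_two_sqrt:
  fixes p :: nat and a :: int
  assumes "\<bar>real_of_int a\<bar> \<le> 2 * sqrt (real p)" and "p \<noteq> 1"
  shows "\<bar>a\<bar> \<le> int p"
proof -
  have "real_of_int (a\<^sup>2) = \<bar>real_of_int a\<bar>\<^sup>2" by simp
  also have "\<dots> \<le> (2 * sqrt (real p))\<^sup>2"
    using assms(1) by (intro power_mono) auto
  also have "\<dots> = real_of_int (4 * int p)" by (simp add: power_mult_distrib)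
  finally have "a\<^sup>2 \<le> 4 * int p" by linarith
  moreover have "(int p + 1)\<^sup>2 - 4 * int p = (int p - 1)\<^sup>2"
    by (simp add: power2_eq_square algebra_simps)
  moreover have "(int p - 1)\<^sup>2 > 0" using assms(2) by simp
  ultimately have "a\<^sup>2 < (int p + 1)\<^sup>2" by linarith
  then have "\<bar>a\<bar>\<^sup>2 < (int p + 1)\<^sup>2" by simp
  then have "\<bar>a\<bar> < int p + 1" by (rule power_less_imp_less_base) simp
  then show ?thesis by linarith
qed

lemma exists_prime_dvd_not_eq:
  fixes X :: int and p :: nat
  assumes "X > 1" and "\<not> int p dvd X"
  shows "\<exists>l. prime l \<and> l \<noteq> p \<and> int l dvd X"
proof -
  have "nat \<bar>X\<bar> \<noteq> 1" using assms(1) by simp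
  then obtain l where l: "prime l" "l dvd nat \<bar>X\<bar>" using prime_factor_nat by blast
  then have "int l dvd X" by simp
  then show ?thesis using l(1) assms(2) by blast
qed

lemma summand_gt_one_not_dvd:
  fixes A B q :: int
  assumes "A \<ge> 1" "B \<ge> 1" "A + B = 2 * q + 2" "q > 2"
  shows "\<exists>X \<in> {A, B}. X > 1 \<and> \<not> q dvd X"
proof (rule ccontr)
  assume "\<not> ?thesis"
  then have A: "A = 1 \<or> q dvd A" and B: "B = 1 \<or> q dvd B" using assms(1,2) by auto
  have q_dvd_iff: "q dvd 2 * q + c \<longleftrightarrow> q dvd c" for c
    by (simp add: dvd_add_right_iff)
  have "\<not> q dvd c" if "0 < c" "c < q" for c using that zdvd_not_zless by blast
  then have "\<not> q dvd 1" "\<not> q dvd 2" using assms(4) by auto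
  consider "A = 1" | "B = 1" | "q dvd A" "q dvd B" using A B by blast
  then show False
  proof cases
    case 1
    then have "q dvd 2 * q + 1" using B assms(3,4) by auto
    then show False using q_dvd_iff \<open>\<not> q dvd 1\<close> by blast
  next
    case 2
    then have "q dvd 2 * q + 1" using A assms(3,4) by auto
    then show False using q_dvd_iff \<open>\<not> q dvd 1\<close> by blast
  next
    case 3
    then have "q dvd 2 * q + 2" using assms(3) by (metis dvd_add)
    then show False using q_dvd_iff \<open>\<not> q dvd 2\<close> by blast
  qed
qed

lemma exists_prime_dvd_hasse_product:
  fixes p :: nat and a :: int
  assumes "p > 2" and "\<bar>real_of_int a\<bar> \<le> 2 * sqrt (real p)"
  shows "\<exists>l. prime l \<and> l \<noteq> p \<and> int l dvd (int p + 1 + a) * (int p + 1 - a)"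
proof -
  have "\<bar>a\<bar> \<le> int p" using abs_le_of_abs_le_two_sqrt assms by simp
  then have "\<exists>X \<in> {int p + 1 + a, int p + 1 - a}. X > 1 \<and> \<not> int p dvd X"
    using assms(1) by (intro summand_gt_one_not_dvd) auto
  then obtain X where X: "X \<in> {int p + 1 + a, int p + 1 - a}" "X > 1" "\<not> int p dvd X"
    by blast
  then obtain l where "prime l" "l \<noteq> p" "int l dvd X"
    using exists_prime_dvd_not_eq by blast
  then show ?thesis using X(1) by auto
qed

theorem lemma2p5:
  shows "(\<forall>(p::nat) (a::int). prime p \<and> p > 2 \<and> \<bar>real_of_int a\<bar> \<le> 2 * sqrt (real p) \<longrightarrow>
            (\<exists>l::nat. prime l \<and> l \<noteq> p \<and>
               int l dvd (int p + 1 + a) * (int p + 1 - a)))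
       \<and> (\<exists>(a::int) (k::nat). \<bar>real_of_int a\<bar> \<le> 2 * sqrt 2 \<and> (3 + a) * (3 - a) = 2 ^ k)"
proof
  show "\<forall>(p::nat) (a::int). prime p \<and> p > 2 \<and> \<bar>real_of_int a\<bar> \<le> 2 * sqrt (real p) \<longrightarrow>
            (\<exists>l::nat. prime l \<and> l \<noteq> p \<and> int l dvd (int p + 1 + a) * (int p + 1 - a))"
    using exists_prime_dvd_hasse_product by blast
  have "(1::real) \<le> sqrt 2" by simp
  then have "\<bar>real_of_int 1\<bar> \<le> 2 * sqrt 2" by linarith
  moreover have "(3 + 1) * (3 - 1) = (2::int) ^ 3" by simp
  ultimately show "\<exists>(a::int) (k::nat). \<bar>real_of_int a\<bar> \<le> 2 * sqrt 2 \<and> (3 + a) * (3 - a) = 2 ^ k"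
    by blast
qed

end
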